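(* Assume the conditions of Theorem 2.1. Let $(r_1,\alpha_1),\ldots,(r_k,\alpha_k)$ be any finite collection with $r_i\in\{0,\ldots,m\}$ and $\alpha_i\in(0,1)$, let $\xi_i$ be the $\alpha_i$-quantile of $G_{r_i}$, and suppose each $g_{r_i}$ is continuous and positive at $\xi_i$. Let $\Sigma_{EL}$ be the $k\times k$ matrix with entries $\omega_{r_ir_j}(\xi_i,\xi_j)/\{g_{r_i}(\xi_i)g_{r_j}(\xi_j)\}$ (the asymptotic covariance of $\sqrt n(\hat\xi_i-\xi_i)_i$ for the EL quantiles) and $\Sigma_{EM}$ the $k\times k$ matrix with entries $\sigma_{r_ir_j}(\xi_i,\xi_j)/\{g_{r_i}(\xi_i)g_{r_j}(\xi_j)\}$ (the asymptotic covariance of $\sqrt n(\breve\xi_i-\xi_i)_i$ for the empirical quantiles). Then $\Sigma_{EM}-\Sigma_{EL}$ is nonnegative definite. In particular this holds for any pair $0\le r,s\le m$ and any levels $\alpha_r,\alpha_s$.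
   Context: Setting: independent samples $\{x_{kj}\}_{j=1}^{n_k}$ from $G_k$ (density $g_k$), $k=0,\ldots,m$, satisfying the density ratio model $dG_k(x)=\exp\{\theta_k^\tau q(x)\}dG_0(x)$, $q$ known $d$-dimensional with linearly independent components and first component $1$, $\theta_0=0$, true value $\theta^*$, $\int h(x;\theta)dG_0<\infty$ for $\theta$ near $\theta^*$; $n=\sum n_k\to\infty$, $\rho_k=n_k/n$ fixed. $h(x;\theta)=\sum_k\rho_k\exp\{\theta_k^\tau q(x)\}$, $h_k(x)=\rho_k\exp\{\theta_k^{*\tau} q(x)\}/h(x;\theta^* )$, $d\bar G=h(x;\theta^* )dG_0$. The EL quantile $\hat\xi_i=\inf\{x:\hat G_{r_i}(x)\ge\alpha_i\}$ with $\hat G_r(x)=n_r^{-1}\sum_{k,j}h_r(x_{kj};\hat\theta)I(x_{kj}\le x)$, $\hat\theta$ the maximizer of $\ell_n(\theta)=-\sum_{k,j}\log[\sum_r\rho_r\exp\{\theta_r^\tau q(x_{kj})\}]+\sum_{k,j}\theta_k^\tau q(x_{kj})$; the empirical quantile $\breve\xi_i$ is the $\alpha_i$-quantile of the empirical distribution of the $r_i$th sample alone. $W$: $md\times md$ matrix with $d\times d$ blocks $W_{rs}=\int qq^\tau\{h_r\delta_{rs}-h_rh_s\}d\bar G$. $\sigma_{rs}(x,y)=\rho_r^{-1}\delta_{rs}\{G_r(x\wedge y)-G_r(x)G_s(y)\}$; $\omega_{rs}(x,y)=\sigma_{rs}(x,y)-(\rho_r\rho_s)^{-1}\{a_{rs}(x\wedge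 y)-B_r^\tau(x)W^{-1}B_s(y)\}$ with $a_{rs}(x)=\int_{-\infty}^x\{\delta_{rs}h_r-h_rh_s\}d\bar G$ and $B_r(x)\in\mathbb R^{md}$ having $s$th $d$-dimensional segment $B_{r,s}(x)=\int_{-\infty}^x\{\delta_{rs}h_r(t)-h_r(t)h_s(t)\}q(t)\,d\bar G(t)$, $s=1,\ldots,m$. *)

theory Defs
  imports "HOL-Probability.Probability" "Jordan_Normal_Form.Gauss_Jordan_Elimination"
begin

text \<open>Parameters: dimension d of q, number m
 (samples 0..m), proportions rho, parameter theta (theta k a = a-th component of
 theta_k), basis function q (q x a = a-th component of q(x)), baseline density g0.\<close>

definition lin :: "nat \<Rightarrow> (nat \<Rightarrow> nat \<Rightarrow> real) \<Rightarrow> (real \<Rightarrow> nat \<Rightarrow> real) \<Rightarrow> nat \<Rightarrow> real \<Rightarrow> real" where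
  "lin d theta q k x = (\<Sum>a<d. theta k a * q x a)"

definition hfun :: "nat \<Rightarrow> nat \<Rightarrow> (nat \<Rightarrow> real) \<Rightarrow> (nat \<Rightarrow> nat \<Rightarrow> real) \<Rightarrow> (real \<Rightarrow> nat \<Rightarrow> real) \<Rightarrow> real \<Rightarrow> real" where
  "hfun d m rho theta q x = (\<Sum>k\<le>m. rho k * exp (lin d theta q k x))"

definition hr :: "nat \<Rightarrow> nat \<Rightarrow> (nat \<Rightarrow> real) \<Rightarrow> (nat \<Rightarrow> nat \<Rightarrow> real) \<Rightarrow> (real \<Rightarrow> nat \<Rightarrow> real) \<Rightarrow> nat \<Rightarrow> real \<Rightarrow> real" where
  "hr d m rho theta q r x = rho r * exp (lin d theta q r x) / hfun d m rho theta q x"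

definition gk :: "nat \<Rightarrow> (nat \<Rightarrow> nat \<Rightarrow> real) \<Rightarrow> (real \<Rightarrow> nat \<Rightarrow> real) \<Rightarrow> (real \<Rightarrow> real) \<Rightarrow> nat \<Rightarrow> real \<Rightarrow> real" where
  "gk d theta q g0 k x = exp (lin d theta q k x) * g0 x"

definition Gk :: "nat \<Rightarrow> (nat \<Rightarrow> nat \<Rightarrow> real) \<Rightarrow> (real \<Rightarrow> nat \<Rightarrow> real) \<Rightarrow> (real \<Rightarrow> real) \<Rightarrow> nat \<Rightarrow> real \<Rightarrow> real" where
  "Gk d theta q g0 k x = (LINT t:{..x}|lborel. gk d theta q g0 k t)"

definition quantile :: "nat \<Rightarrow> (nat \<Rightarrow> nat \<Rightarrow> real) \<Rightarrow> (real \<Rightarrow> nat \<Rightarrow> real) \<Rightarrow> (real \<Rightarrow> real) \<Rightarrow> nat \<Rightarrow> real \<Rightarrow> real" where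
  "quantile d theta q g0 k \<alpha> = Inf {x. \<alpha> \<le> Gk d theta q g0 k x}"

definition Gbar :: "nat \<Rightarrow> nat \<Rightarrow> (nat \<Rightarrow> real) \<Rightarrow> (nat \<Rightarrow> nat \<Rightarrow> real) \<Rightarrow> (real \<Rightarrow> nat \<Rightarrow> real) \<Rightarrow> (real \<Rightarrow> real) \<Rightarrow> real measure" where
  "Gbar d m rho theta q g0 = density lborel (\<lambda>x. ennreal (hfun d m rho theta q x * g0 x))"

definition kron :: "nat \<Rightarrow> nat \<Rightarrow> real" where
  "kron r s = (if r = s then 1 else 0)"

definition sigma_rs :: "nat \<Rightarrow> (nat \<Rightarrow> real) \<Rightarrow> (nat \<Rightarrow> nat \<Rightarrow> real) \<Rightarrow> (real \<Rightarrow> nat \<Rightarrow> real) \<Rightarrow> (real \<Rightarrow> real) \<Rightarrow> nat \<Rightarrow> nat \<Rightarrow> real \<Rightarrow> real \<Rightarrow> real" where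
  "sigma_rs d rho theta q g0 r s x y =
     kron r s / rho r * (Gk d theta q g0 r (min x y) - Gk d theta q g0 r x * Gk d theta q g0 s y)"

definition a_rs :: "nat \<Rightarrow> nat \<Rightarrow> (nat \<Rightarrow> real) \<Rightarrow> (nat \<Rightarrow> nat \<Rightarrow> real) \<Rightarrow> (real \<Rightarrow> nat \<Rightarrow> real) \<Rightarrow> (real \<Rightarrow> real) \<Rightarrow> nat \<Rightarrow> nat \<Rightarrow> real \<Rightarrow> real" where
  "a_rs d m rho theta q g0 r s x =
     (LINT t:{..x}|Gbar d m rho theta q g0.
        kron r s * hr d m rho theta q r t - hr d m rho theta q r t * hr d m rho theta q s t)"

text \<open>B_r(x) in R^{md}; index (s-1)*d + a (s = 1..m, a < d) holds the a-th component
  of the s-th d-dimensional segment\<close>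
definition B_r :: "nat \<Rightarrow> nat \<Rightarrow> (nat \<Rightarrow> real) \<Rightarrow> (nat \<Rightarrow> nat \<Rightarrow> real) \<Rightarrow> (real \<Rightarrow> nat \<Rightarrow> real) \<Rightarrow> (real \<Rightarrow> real) \<Rightarrow> nat \<Rightarrow> real \<Rightarrow> real vec" where
  "B_r d m rho theta q g0 r x = vec (m * d) (\<lambda>i.
     (let s = i div d + 1; a = i mod d in
      LINT t:{..x}|Gbar d m rho theta q g0.
        (kron r s * hr d m rho theta q r t - hr d m rho theta q r t * hr d m rho theta q s t) * q t a))"

definition Wmat :: "nat \<Rightarrow> nat \<Rightarrow> (nat \<Rightarrow> real) \<Rightarrow> (nat \<Rightarrow> nat \<Rightarrow> real) \<Rightarrow> (real \<Rightarrow> nat \<Rightarrow> real) \<Rightarrow> (real \<Rightarrow> real) \<Rightarrow> real mat" where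
  "Wmat d m rho theta q g0 = mat (m * d) (m * d) (\<lambda>(i, j).
     (let r = i div d + 1; a = i mod d; s = j div d + 1; b = j mod d in
      LINT t|Gbar d m rho theta q g0.
        q t a * q t b * (hr d m rho theta q r t * kron r s - hr d m rho theta q r t * hr d m rho theta q s t)))"

definition omega_rs :: "nat \<Rightarrow> nat \<Rightarrow> (nat \<Rightarrow> real) \<Rightarrow> (nat \<Rightarrow> nat \<Rightarrow> real) \<Rightarrow> (real \<Rightarrow> nat \<Rightarrow> real) \<Rightarrow> (real \<Rightarrow> real) \<Rightarrow> nat \<Rightarrow> nat \<Rightarrow> real \<Rightarrow> real \<Rightarrow> real" where
  "omega_rs d m rho theta q g0 r s x y =
     sigma_rs d rho theta q g0 r s x y
     - (a_rs d m rho theta q g0 r s (min x y)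
        - B_r d m rho theta q g0 r x \<bullet> (the (mat_inverse (Wmat d m rho theta q g0)) *\<^sub>v B_r d m rho theta q g0 s y))
       / (rho r * rho s)"

definition Sigma_EL :: "nat \<Rightarrow> nat \<Rightarrow> (nat \<Rightarrow> real) \<Rightarrow> (nat \<Rightarrow> nat \<Rightarrow> real) \<Rightarrow> (real \<Rightarrow> nat \<Rightarrow> real) \<Rightarrow> (real \<Rightarrow> real) \<Rightarrow> nat \<Rightarrow> (nat \<Rightarrow> nat) \<Rightarrow> (nat \<Rightarrow> real) \<Rightarrow> real mat" where
  "Sigma_EL d m rho theta q g0 K rr al = mat K K (\<lambda>(i, j).
     (let xi = quantile d theta q g0 (rr i) (al i); xj = quantile d theta q g0 (rr j) (al j) in
      omega_rs d m rho theta q g0 (rr i) (rr j) xi xj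
        / (gk d theta q g0 (rr i) xi * gk d theta q g0 (rr j) xj)))"

definition Sigma_EM :: "nat \<Rightarrow> (nat \<Rightarrow> real) \<Rightarrow> (nat \<Rightarrow> nat \<Rightarrow> real) \<Rightarrow> (real \<Rightarrow> nat \<Rightarrow> real) \<Rightarrow> (real \<Rightarrow> real) \<Rightarrow> nat \<Rightarrow> (nat \<Rightarrow> nat) \<Rightarrow> (nat \<Rightarrow> real) \<Rightarrow> real mat" where
  "Sigma_EM d rho theta q g0 K rr al = mat K K (\<lambda>(i, j).
     (let xi = quantile d theta q g0 (rr i) (al i); xj = quantile d theta q g0 (rr j) (al j) in
      sigma_rs d rho theta q g0 (rr i) (rr j) xi xj
        / (gk d theta q g0 (rr i) xi * gk d theta q g0 (rr j) xj)))"

definition nonneg_definite :: "nat \<Rightarrow> real mat \<Rightarrow> bool" where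
  "nonneg_definite n M \<longleftrightarrow> M \<in> carrier_mat n n \<and> (\<forall>v \<in> carrier_vec n. 0 \<le> v \<bullet> (M *\<^sub>v v))"

end

theory Submission
  imports Defs "Jordan_Normal_Form.Determinant"
begin

text \<open>After scaling row and column \<open>i\<close> by \<open>\<rho>\<^sub>r\<^sub>i g\<^sub>r\<^sub>i(\<xi>\<^sub>i)\<close>, every entry of \<open>\<Sigma>\<^sub>E\<^sub>M - \<Sigma>\<^sub>E\<^sub>L\<close> is
  built from integrals against \<open>Gbar\<close> of products of two "features" (indicators \<open>I(t \<le> \<xi>\<^sub>i)\<close>
  and components of \<open>q\<close>) weighted by \<open>\<delta>\<^sub>r\<^sub>s h\<^sub>r - h\<^sub>r h\<^sub>s\<close>. For fixed \<open>t\<close> this weight is the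
  covariance matrix of a multinomial distribution with cell probabilities \<open>h\<^sub>0(t), \<dots>, h\<^sub>m(t)\<close>,
  so the Gram matrix \<open>[[A, B\<^sup>T], [B, W]]\<close> of all features is nonnegative definite, and the
  scaled \<open>\<Sigma>\<^sub>E\<^sub>M - \<Sigma>\<^sub>E\<^sub>L\<close> is its Schur complement \<open>A - B\<^sup>T W\<^sup>-\<^sup>1 B\<close>. \<open>W\<close> is invertible because
  the components of \<open>q\<close> are linearly independent, and all entries are finite because
  \<open>\<integral> h(x;\<theta>) dG\<^sub>0\<close> is finite for \<open>\<theta>\<close> near \<open>\<theta>\<^sup>*\<close>.\<close>

lemma kron_commute: "kron a b = kron b a"
  unfolding kron_def by auto

lemma sum_mult_kron: "a \<le> m \<Longrightarrow> (\<Sum>k\<le>m. f k * kron a k) = (f a :: real)"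
  unfolding kron_def by (simp add: if_distrib cong: if_cong)

lemma sum_kron_Suc:
  fixes G :: "nat \<Rightarrow> real"
  assumes "1 \<le> k" "k \<le> m"
  shows "(\<Sum>s<m. kron (s + 1) k * G s) = G (k - 1)"
proof -
  have "(\<Sum>s<m. kron (s + 1) k * G s) = (\<Sum>s<m. if s = k - 1 then G s else 0)"
    using assms by (intro sum.cong refl) (auto simp: kron_def)
  also have "\<dots> = G (k - 1)"
    using assms by (simp add: sum.delta)
  finally show ?thesis .
qed

lemma multinomial_covariance_sum:
  fixes h :: "nat \<Rightarrow> real"
  assumes "a \<le> m" "b \<le> m" "(\<Sum>k\<le>m. h k) = 1"
  shows "(\<Sum>k\<le>m. h k * (kron a k - h a) * (kron b k - h b)) = kron a b * h a - h a * h b"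
proof -
  have "(\<Sum>k\<le>m. h k * (kron a k - h a) * (kron b k - h b))
     = (\<Sum>k\<le>m. (h k * kron b k) * kron a k) - h b * (\<Sum>k\<le>m. h k * kron a k)
       - h a * (\<Sum>k\<le>m. h k * kron b k) + h a * h b * (\<Sum>k\<le>m. h k)"
    by (simp add: sum_subtractf sum_distrib_left sum.distrib algebra_simps)
  also have "\<dots> = h a * kron b a - h b * h a - h a * h b + h a * h b"
    using assms by (simp add: sum_mult_kron)
  finally show ?thesis by (simp add: kron_commute algebra_simps)
qed

lemma multinomial_covariance_quadratic_form:
  fixes h x :: "nat \<Rightarrow> real"
  assumes r: "\<forall>p\<in>P. r p \<le> m" and h: "(\<Sum>k\<le>m. h k) = 1"
  shows "(\<Sum>p\<in>P. \<Sum>p'\<in>P. x p * x p' * (kron (r p) (r p') * h (r p) - h (r p) * h (r p')))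
       = (\<Sum>k\<le>m. h k * (\<Sum>p\<in>P. x p * (kron (r p) k - h (r p)))\<^sup>2)"
proof -
  have "(\<Sum>k\<le>m. h k * (\<Sum>p\<in>P. x p * (kron (r p) k - h (r p)))\<^sup>2)
    = (\<Sum>k\<le>m. \<Sum>p\<in>P. \<Sum>p'\<in>P. x p * x p' * (h k * (kron (r p) k - h (r p)) * (kron (r p') k - h (r p'))))"
    by (simp add: power2_eq_square sum_product sum_distrib_left mult_ac)
  also have "\<dots> = (\<Sum>p\<in>P. \<Sum>p'\<in>P. \<Sum>k\<le>m. x p * x p' * (h k * (kron (r p) k - h (r p)) * (kron (r p') k - h (r p'))))"
    by (subst sum.swap) (simp add: sum.swap[of _ "{..m}"])
  also have "\<dots> = (\<Sum>p\<in>P. \<Sum>p'\<in>P. x p * x p' * (kron (r p) (r p') * h (r p) - h (r p) * h (r p')))"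
    using r by (intro sum.cong refl) (simp add: multinomial_covariance_sum[OF _ _ h] flip: sum_distrib_left)
  finally show ?thesis by simp
qed

lemma sum_lessThan_add:
  fixes f :: "nat \<Rightarrow> 'a :: comm_monoid_add"
  shows "(\<Sum>p<K + N. f p) = (\<Sum>p<K. f p) + (\<Sum>j<N. f (K + j))"
  by (induction N) (auto simp: ac_simps)

lemma sum_lessThan_mult:
  fixes f :: "nat \<Rightarrow> 'a :: comm_monoid_add"
  shows "(\<Sum>j<m * d. f j) = (\<Sum>s<m. \<Sum>a<d. f (s * d + a))"
proof (induction m)
  case (Suc m)
  have "(\<Sum>j<Suc m * d. f j) = (\<Sum>j<m * d + d. f j)"
    by (simp add: add.commute)
  also have "\<dots> = (\<Sum>j<m * d. f j) + (\<Sum>a<d. f (m * d + a))"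
    by (rule sum_lessThan_add)
  finally show ?case
    using Suc by simp
qed simp

text \<open>Schur complement criterion in coordinates: the test vector is \<open>(c, -w)\<close>.\<close>

lemma schur_complement_nonneg:
  fixes G :: "nat \<Rightarrow> nat \<Rightarrow> real" and c w :: "nat \<Rightarrow> real"
  assumes psd: "\<And>x. 0 \<le> (\<Sum>p<K + N. \<Sum>p'<K + N. x p * x p' * G p p')"
    and sym: "\<And>i j. G (K + j) i = G i (K + j)"
    and sol: "\<And>j. j < N \<Longrightarrow> (\<Sum>j'<N. G (K + j) (K + j') * w j') = (\<Sum>i<K. c i * G i (K + j))"
  shows "(\<Sum>j<N. w j * (\<Sum>i<K. c i * G i (K + j))) \<le> (\<Sum>i<K. \<Sum>l<K. c i * c l * G i l)"
proof -
  define x where "x p = (if p < K then c p else - w (p - K))" for p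
  define cross where "cross = (\<Sum>j<N. w j * (\<Sum>i<K. c i * G i (K + j)))"
  have cross_left: "(\<Sum>i<K. \<Sum>j<N. x i * x (K + j) * G i (K + j)) = - cross"
    unfolding x_def cross_def
    by (subst sum.swap) (simp add: sum_negf sum_distrib_left mult_ac)
  have cross_right: "(\<Sum>j<N. \<Sum>l<K. x (K + j) * x l * G (K + j) l) = - cross"
    unfolding x_def cross_def by (simp add: sum_negf sum_distrib_left mult_ac sym)
  have lower_right: "(\<Sum>j<N. \<Sum>j'<N. x (K + j) * x (K + j') * G (K + j) (K + j')) = cross"
    unfolding x_def cross_def
    by (intro sum.cong refl) (simp add: sol sum_distrib_left mult_ac flip: sol)
  have "0 \<le> (\<Sum>p<K + N. \<Sum>p'<K + N. x p * x p' * G p p')"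
    by (rule psd)
  also have "\<dots> = (\<Sum>i<K. \<Sum>l<K. c i * c l * G i l) - cross"
    by (simp add: sum_lessThan_add sum.distrib cross_left cross_right lower_right)
      (simp add: x_def)
  finally show ?thesis
    unfolding cross_def by simp
qed

lemma bilinear_form_of_combinations:
  fixes c :: "nat \<Rightarrow> real"
  shows "(\<Sum>i<K. \<Sum>l<K. c i * c l * (\<Sum>j<N. u i j * (\<Sum>j'<N. W j j' * u l j')))
    = (\<Sum>j<N. (\<Sum>i<K. c i * u i j) * (\<Sum>j'<N. W j j' * (\<Sum>l<K. c l * u l j')))"
proof -
  have "(\<Sum>i<K. \<Sum>l<K. c i * c l * (\<Sum>j<N. u i j * (\<Sum>j'<N. W j j' * u l j')))
     = (\<Sum>i<K. \<Sum>l<K. \<Sum>j<N. \<Sum>j'<N. c i * u i j * (W j j' * (c l * u l j')))"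
    by (simp add: sum_distrib_left mult_ac)
  also have "\<dots> = (\<Sum>i<K. \<Sum>j<N. \<Sum>l<K. \<Sum>j'<N. c i * u i j * (W j j' * (c l * u l j')))"
    by (intro sum.cong refl, rule sum.swap)
  also have "\<dots> = (\<Sum>i<K. \<Sum>j<N. \<Sum>j'<N. \<Sum>l<K. c i * u i j * (W j j' * (c l * u l j')))"
    by (intro sum.cong refl, rule sum.swap)
  also have "\<dots> = (\<Sum>j<N. \<Sum>i<K. \<Sum>j'<N. \<Sum>l<K. c i * u i j * (W j j' * (c l * u l j')))"
    by (rule sum.swap)
  also have "\<dots> = (\<Sum>j<N. \<Sum>i<K. (c i * u i j) * (\<Sum>j'<N. W j j' * (\<Sum>l<K. c l * u l j')))"
    by (intro sum.cong refl) (simp only: sum_distrib_left)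
  also have "\<dots> = (\<Sum>j<N. (\<Sum>i<K. c i * u i j) * (\<Sum>j'<N. W j j' * (\<Sum>l<K. c l * u l j')))"
    by (simp only: sum_distrib_right)
  finally show ?thesis .
qed

lemma mult_mat_vec_index_sum:
  assumes "A \<in> carrier_mat n k" "v \<in> carrier_vec k" "j < n"
  shows "(A *\<^sub>v v) $ j = (\<Sum>j'<k. A $$ (j, j') * v $ j')"
  using assms by (simp add: scalar_prod_def row_def atLeast0LessThan)

lemma scalar_prod_mult_mat_vec_sum:
  assumes "A \<in> carrier_mat n n" "u \<in> carrier_vec n" "v \<in> carrier_vec n"
  shows "u \<bullet> (A *\<^sub>v v) = (\<Sum>j<n. u $ j * (\<Sum>j'<n. A $$ (j, j') * v $ j'))"
  using assms by (simp add: scalar_prod_def mult_mat_vec_def row_def atLeast0LessThan)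

lemma mult_mat_vec_right_inverse:
  fixes A B :: "'a :: semiring_1 mat"
  assumes "A \<in> carrier_mat n n" "B \<in> carrier_mat n n" "A * B = 1\<^sub>m n" "v \<in> carrier_vec n"
  shows "A *\<^sub>v (B *\<^sub>v v) = v"
  using assms by (simp flip: assoc_mult_mat_vec)

lemma mat_inverse_if_trivial_kernel:
  fixes A :: "'a :: field mat"
  assumes A: "A \<in> carrier_mat n n"
    and ker: "\<And>v. v \<in> carrier_vec n \<Longrightarrow> A *\<^sub>v v = 0\<^sub>v n \<Longrightarrow> v = 0\<^sub>v n"
  obtains B where "mat_inverse A = Some B"
proof (cases "mat_inverse A")
  case None
  have "Determinant.det A \<noteq> 0"
    using det_0_iff_vec_prod_zero[OF A] ker by blast
  then have "A \<in> Units (ring_mat TYPE('a) n undefined)"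
    by (rule det_non_zero_imp_unit[OF A])
  moreover have "A \<notin> Units (ring_mat TYPE('a) n undefined)"
    by (rule mat_inverse(1)[OF A None])
  ultimately show ?thesis
    by contradiction
qed

lemma sq_div4_le_exp_add_exp_minus: "(y :: real)\<^sup>2 / 4 \<le> exp y + exp (- y)"
proof -
  have "\<bar>y\<bar> / 2 \<le> exp (\<bar>y\<bar> / 2)"
    using exp_ge_add_one_self[of "\<bar>y\<bar> / 2"] by linarith
  then have "(\<bar>y\<bar> / 2)\<^sup>2 \<le> (exp (\<bar>y\<bar> / 2))\<^sup>2"
    by (intro power_mono) auto
  also have "\<dots> = exp \<bar>y\<bar>"
    by (simp add: power2_eq_square flip: exp_add)
  also have "\<dots> \<le> exp y + exp (- y)"
    by (cases "y \<ge> 0") auto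
  finally show ?thesis
    by (simp add: power_divide)
qed

lemma abs_mult_mult_le:
  fixes x y k hx hy :: real
  assumes "\<bar>k\<bar> \<le> hx" "\<bar>k\<bar> \<le> hy"
  shows "\<bar>x * y * k\<bar> \<le> x\<^sup>2 * hx + y\<^sup>2 * hy"
proof -
  have "2 * (\<bar>x\<bar> * \<bar>y\<bar>) \<le> x\<^sup>2 + y\<^sup>2"
    using sum_squares_bound[of "\<bar>x\<bar>" "\<bar>y\<bar>"] by simp
  then have "2 * (\<bar>x\<bar> * \<bar>y\<bar>) * \<bar>k\<bar> \<le> (x\<^sup>2 + y\<^sup>2) * \<bar>k\<bar>"
    by (rule mult_right_mono) simp
  then have "\<bar>x * y * k\<bar> \<le> (x\<^sup>2 + y\<^sup>2) / 2 * \<bar>k\<bar>"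
    by (simp add: abs_mult)
  also have "\<dots> = x\<^sup>2 * \<bar>k\<bar> / 2 + y\<^sup>2 * \<bar>k\<bar> / 2"
    by (simp add: algebra_simps)
  also have "\<dots> \<le> x\<^sup>2 * hx + y\<^sup>2 * hy"
  proof -
    have "x\<^sup>2 * \<bar>k\<bar> \<le> x\<^sup>2 * hx" "y\<^sup>2 * \<bar>k\<bar> \<le> y\<^sup>2 * hy"
      using assms by (simp_all add: mult_left_mono)
    moreover have "0 \<le> x\<^sup>2 * \<bar>k\<bar>" "0 \<le> y\<^sup>2 * \<bar>k\<bar>"
      by simp_all
    ultimately show ?thesis
      by linarith
  qed
  finally show ?thesis .
qed

lemma lin_fun_upd:
  assumes "a < d"
  shows "lin d (th(s := (th s)(a := v))) q s x = lin d th q s x + (v - th s a) * q x a"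
proof -
  have "lin d (th(s := (th s)(a := v))) q s x
      = (\<Sum>b<d. th s b * q x b + (if b = a then (v - th s a) * q x a else 0))"
    unfolding lin_def by (intro sum.cong) (auto simp: algebra_simps)
  also have "\<dots> = lin d th q s x + (v - th s a) * q x a"
    unfolding lin_def sum.distrib using assms by simp
  finally show ?thesis .
qed

text \<open>Moving \<open>\<theta>\<^sub>s\<^sub>a\<close> by \<open>\<plusminus>\<delta>\<close> dominates \<open>q\<^sub>a\<^sup>2 exp(\<theta>\<^sub>s\<^sup>\<tau> q)\<close>, since \<open>y\<^sup>2 \<le> 4 (e\<^sup>y + e\<^sup>-\<^sup>y)\<close>.\<close>

lemma sq_exp_lin_le_hfun_shifts:
  assumes a: "a < d" and s: "s \<le> m" and rho: "\<forall>k\<le>m. 0 \<le> rho k" "0 < rho s" and \<delta>: "0 < \<delta>"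
  shows "(q x a)\<^sup>2 * exp (lin d th q s x)
    \<le> 4 / (\<delta>\<^sup>2 * rho s) * (hfun d m rho (th(s := (th s)(a := th s a + \<delta>))) q x
                            + hfun d m rho (th(s := (th s)(a := th s a - \<delta>))) q x)"
proof -
  define th\<^sub>1 where "th\<^sub>1 = th(s := (th s)(a := th s a + \<delta>))"
  define th\<^sub>2 where "th\<^sub>2 = th(s := (th s)(a := th s a - \<delta>))"
  have term_le_hfun: "rho s * exp (lin d th' q s x) \<le> hfun d m rho th' q x" for th'
    unfolding hfun_def using s rho
    by (intro member_le_sum[where f = "\<lambda>k. rho k * exp (lin d th' q k x)"]) auto
  have "(q x a)\<^sup>2 * exp (lin d th q s x)
      = exp (lin d th q s x) * ((\<delta> * q x a)\<^sup>2 / 4) * (4 / \<delta>\<^sup>2)"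
    using \<delta> by (simp add: power_mult_distrib field_simps)
  also have "\<dots> \<le> exp (lin d th q s x) * (exp (\<delta> * q x a) + exp (- (\<delta> * q x a))) * (4 / \<delta>\<^sup>2)"
    using sq_div4_le_exp_add_exp_minus[of "\<delta> * q x a"] \<delta>
    by (intro mult_right_mono mult_left_mono) auto
  also have "\<dots> = (rho s * exp (lin d th\<^sub>1 q s x) + rho s * exp (lin d th\<^sub>2 q s x)) * (4 / (\<delta>\<^sup>2 * rho s))"
    using rho \<delta> unfolding th\<^sub>1_def th\<^sub>2_def
    by (simp add: lin_fun_upd[OF a] exp_add exp_diff exp_minus field_simps)
  also have "\<dots> \<le> (hfun d m rho th\<^sub>1 q x + hfun d m rho th\<^sub>2 q x) * (4 / (\<delta>\<^sup>2 * rho s))"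
    using term_le_hfun rho \<delta> by (intro mult_right_mono add_mono) auto
  finally show ?thesis
    unfolding th\<^sub>1_def th\<^sub>2_def by (simp add: mult_ac)
qed

locale density_ratio_model =
  fixes d m :: nat and rho :: "nat \<Rightarrow> real" and theta :: "nat \<Rightarrow> nat \<Rightarrow> real"
    and q :: "real \<Rightarrow> nat \<Rightarrow> real" and g0 :: "real \<Rightarrow> real"
  assumes d_pos: "0 < d"
    and q_meas: "\<forall>a<d. (\<lambda>x. q x a) \<in> borel_measurable borel"
    and q_indep: "\<forall>c :: nat \<Rightarrow> real.
        (AE x in density lborel (\<lambda>x. ennreal (g0 x)). (\<Sum>a<d. c a * q x a) = 0)
        \<longrightarrow> (\<forall>a<d. c a = 0)"
    and g0_meas: "g0 \<in> borel_measurable borel"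
    and g0_nonneg: "\<forall>x. 0 \<le> g0 x"
    and theta0: "\<forall>a<d. theta 0 a = 0"
    and rho_pos: "\<forall>k\<le>m. 0 < rho k"
    and h_integrable: "\<exists>\<epsilon>>0. \<forall>theta' :: nat \<Rightarrow> nat \<Rightarrow> real.
        (\<forall>a<d. theta' 0 a = 0) \<and> (\<forall>k\<le>m. \<forall>a<d. \<bar>theta' k a - theta k a\<bar> < \<epsilon>)
        \<longrightarrow> integrable (density lborel (\<lambda>x. ennreal (g0 x))) (hfun d m rho theta' q)"
begin

abbreviation "h \<equiv> hfun d m rho theta q"
abbreviation "H \<equiv> hr d m rho theta q"
abbreviation "M \<equiv> Gbar d m rho theta q g0"
abbreviation "W \<equiv> Wmat d m rho theta q g0"
abbreviation "B \<equiv> B_r d m rho theta q g0"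

definition cov_kernel :: "nat \<Rightarrow> nat \<Rightarrow> real \<Rightarrow> real" where
  "cov_kernel r s t = kron r s * H r t - H r t * H s t"

lemma g0_measurable [measurable]: "g0 \<in> borel_measurable borel"
  using g0_meas .

lemma q_measurable [measurable]: "a < d \<Longrightarrow> (\<lambda>x. q x a) \<in> borel_measurable borel"
  using q_meas by auto

lemma hfun_measurable [measurable]: "(\<lambda>x. hfun d m rho th q x) \<in> borel_measurable borel"
  unfolding hfun_def lin_def by measurable

lemma hr_measurable [measurable]: "(\<lambda>x. hr d m rho th q r x) \<in> borel_measurable borel"
  unfolding hr_def lin_def by measurable

lemma cov_kernel_measurable [measurable]: "cov_kernel r s \<in> borel_measurable borel"
  unfolding cov_kernel_def by measurable

lemma hfun_pos: "0 < hfun d m rho th q x"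
  unfolding hfun_def using rho_pos by (intro sum_pos) auto

lemma hr_pos: "r \<le> m \<Longrightarrow> 0 < H r t"
  unfolding hr_def using rho_pos hfun_pos by (auto intro!: divide_pos_pos)

lemma hr_nonneg: "r \<le> m \<Longrightarrow> 0 \<le> H r t"
  using hr_pos less_imp_le by blast

lemma sum_hr: "(\<Sum>r\<le>m. H r t) = 1"
  using hfun_pos[of theta t] unfolding hr_def by (simp add: hfun_def flip: sum_divide_distrib)

lemma hr_le_one: "r \<le> m \<Longrightarrow> H r t \<le> 1"
  using member_le_sum[of r "{..m}" "\<lambda>k. H k t"] hr_nonneg sum_hr by auto

lemma hfun_mult_hr: "h t * H r t = rho r * exp (lin d theta q r t)"
  unfolding hr_def using hfun_pos[of theta t] by simp

lemma cov_kernel_abs_le: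
  assumes "r \<le> m" "s \<le> m"
  shows "\<bar>cov_kernel r s t\<bar> \<le> H s t"
proof (cases "r = s")
  case True
  have "0 \<le> H s t * (1 - H s t)" "H s t * (1 - H s t) \<le> H s t"
    using assms hr_nonneg[of s t] hr_le_one[of s t] by (auto intro: mult_left_le)
  then show ?thesis
    using True by (simp add: cov_kernel_def kron_def algebra_simps)
next
  case False
  then show ?thesis
    using assms hr_nonneg hr_le_one
    by (simp add: cov_kernel_def kron_def abs_mult mult_left_le_one_le)
qed

lemma cov_kernel_commute: "cov_kernel r s t = cov_kernel s r t"
  unfolding cov_kernel_def kron_def by auto

lemma integrable_Gbar_iff:
  "f \<in> borel_measurable borel \<Longrightarrow> integrable M f \<longleftrightarrow> integrable lborel (\<lambda>x. (h x * g0 x) * f x)"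
  unfolding Gbar_def
  by (subst integrable_density) (auto simp: g0_nonneg hfun_pos less_imp_le)

lemma integrable_g0_iff:
  "f \<in> borel_measurable borel \<Longrightarrow>
    integrable (density lborel (\<lambda>x. ennreal (g0 x))) f \<longleftrightarrow> integrable lborel (\<lambda>x. g0 x * f x)"
  by (subst integrable_density) (auto simp: g0_nonneg)

lemma AE_Gbar_imp_AE_g0:
  assumes "AE x in M. P x"
  shows "AE x in density lborel (\<lambda>x. ennreal (g0 x)). P x"
proof -
  have "AE x in lborel. 0 < ennreal (h x * g0 x) \<longrightarrow> P x"
    using assms unfolding Gbar_def by (subst (asm) AE_density) auto
  then have "AE x in lborel. 0 < ennreal (g0 x) \<longrightarrow> P x"
    by (rule eventually_mono) (use hfun_pos[of theta] in auto)
  then show ?thesis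
    by (subst AE_density) auto
qed

lemma integrable_hfun_shift:
  obtains \<epsilon> :: real where "0 < \<epsilon>" and "\<And>s a v. 1 \<le> s \<Longrightarrow> \<bar>v\<bar> < \<epsilon> \<Longrightarrow>
    integrable lborel (\<lambda>x. g0 x * hfun d m rho (theta(s := (theta s)(a := theta s a + v))) q x)"
proof -
  obtain \<epsilon> where \<epsilon>: "\<epsilon> > 0" and int: "\<And>theta' :: nat \<Rightarrow> nat \<Rightarrow> real.
        (\<forall>a<d. theta' 0 a = 0) \<Longrightarrow> (\<forall>k\<le>m. \<forall>a<d. \<bar>theta' k a - theta k a\<bar> < \<epsilon>)
        \<Longrightarrow> integrable lborel (\<lambda>x. g0 x * hfun d m rho theta' q x)"
    using h_integrable by (auto simp: integrable_g0_iff)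
  show ?thesis
  proof (rule that[OF \<epsilon>], rule int)
    fix s a :: nat and v :: real
    assume "1 \<le> s" "\<bar>v\<bar> < \<epsilon>"
    then show "\<forall>a'<d. (theta(s := (theta s)(a := theta s a + v))) 0 a' = 0"
      and "\<forall>k\<le>m. \<forall>a'<d. \<bar>(theta(s := (theta s)(a := theta s a + v))) k a' - theta k a'\<bar> < \<epsilon>"
      using theta0 \<epsilon> by auto
  qed
qed

lemma integrable_Gbar_const: "integrable M (\<lambda>_. 1 :: real)"
proof -
  obtain \<epsilon> :: real where "0 < \<epsilon>" and shifted: "\<And>s a v. 1 \<le> s \<Longrightarrow> \<bar>v\<bar> < \<epsilon> \<Longrightarrow>
      integrable lborel (\<lambda>x. g0 x * hfun d m rho (theta(s := (theta s)(a := theta s a + v))) q x)"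
    using integrable_hfun_shift by blast
  from shifted[of 1 0 0] \<open>0 < \<epsilon>\<close> have "integrable lborel (\<lambda>x. g0 x * h x)"
    by simp
  then show ?thesis
    by (simp add: integrable_Gbar_iff mult_ac)
qed

lemma integrable_q_sq_exp_lin:
  assumes s: "1 \<le> s" "s \<le> m" and a: "a < d"
  shows "integrable lborel (\<lambda>x. g0 x * ((q x a)\<^sup>2 * exp (lin d theta q s x)))"
proof -
  obtain \<epsilon> :: real where "0 < \<epsilon>" and shifted: "\<And>v. \<bar>v\<bar> < \<epsilon> \<Longrightarrow>
      integrable lborel (\<lambda>x. g0 x * hfun d m rho (theta(s := (theta s)(a := theta s a + v))) q x)"
    using integrable_hfun_shift s(1) by metis
  define \<delta> where "\<delta> = \<epsilon> / 2"
  have \<delta>: "0 < \<delta>" "\<bar>\<delta>\<bar> < \<epsilon>" "\<bar>- \<delta>\<bar> < \<epsilon>"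
    using \<open>0 < \<epsilon>\<close> by (simp_all add: \<delta>_def)
  let ?h\<^sub>1 = "hfun d m rho (theta(s := (theta s)(a := theta s a + \<delta>))) q"
  let ?h\<^sub>2 = "hfun d m rho (theta(s := (theta s)(a := theta s a + - \<delta>))) q"
  define C where "C = 4 / (\<delta>\<^sup>2 * rho s)"
  show ?thesis
  proof (rule Bochner_Integration.integrable_bound)
    show "integrable lborel (\<lambda>x. C * (g0 x * ?h\<^sub>1 x + g0 x * ?h\<^sub>2 x))"
      using shifted[OF \<delta>(2)] shifted[OF \<delta>(3)] by auto
    show "(\<lambda>x. g0 x * ((q x a)\<^sup>2 * exp (lin d theta q s x))) \<in> borel_measurable lborel"
      using a unfolding lin_def by measurable
    show "AE x in lborel. norm (g0 x * ((q x a)\<^sup>2 * exp (lin d theta q s x)))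
       \<le> norm (C * (g0 x * ?h\<^sub>1 x + g0 x * ?h\<^sub>2 x))"
    proof (rule AE_I2)
      fix x
      have "(q x a)\<^sup>2 * exp (lin d theta q s x) \<le> C * (?h\<^sub>1 x + ?h\<^sub>2 x)"
        using sq_exp_lin_le_hfun_shifts[OF a s(2) _ _ \<delta>(1), where rho = rho and th = theta and x = x]
          rho_pos s unfolding C_def by (simp add: less_imp_le)
      then have "g0 x * ((q x a)\<^sup>2 * exp (lin d theta q s x)) \<le> g0 x * (C * (?h\<^sub>1 x + ?h\<^sub>2 x))"
        using g0_nonneg by (simp add: mult_left_mono)
      then show "norm (g0 x * ((q x a)\<^sup>2 * exp (lin d theta q s x)))
          \<le> norm (C * (g0 x * ?h\<^sub>1 x + g0 x * ?h\<^sub>2 x))"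
        using g0_nonneg by (simp add: algebra_simps)
    qed
  qed
qed

lemma integrable_q_sq_hr:
  assumes "1 \<le> s" "s \<le> m" and a: "a < d"
  shows "integrable M (\<lambda>t. (q t a)\<^sup>2 * H s t)"
proof -
  have "integrable lborel (\<lambda>x. rho s * (g0 x * ((q x a)\<^sup>2 * exp (lin d theta q s x))))"
    using integrable_q_sq_exp_lin[OF assms] by (rule integrable_mult_right)
  also have "(\<lambda>x. rho s * (g0 x * ((q x a)\<^sup>2 * exp (lin d theta q s x))))
      = (\<lambda>x. (h x * g0 x) * ((q x a)\<^sup>2 * H s x))"
  proof
    fix x
    have "(h x * g0 x) * ((q x a)\<^sup>2 * H s x) = g0 x * (q x a)\<^sup>2 * (h x * H s x)"
      by (simp only: ac_simps)
    then show "rho s * (g0 x * ((q x a)\<^sup>2 * exp (lin d theta q s x))) = (h x * g0 x) * ((q x a)\<^sup>2 * H s x)"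
      by (simp add: hfun_mult_hr ac_simps)
  qed
  finally show ?thesis
    using a by (subst integrable_Gbar_iff) auto
qed

text \<open>Features indexed by \<open>p < K + m d\<close>: for \<open>p < K\<close> the indicator of \<open>(-\<infinity>, \<xi>\<^sub>p]\<close> attached to
  sample \<open>r\<^sub>p\<close>; for \<open>p = K + (s - 1) d + a\<close> the component \<open>q\<^sub>a\<close> attached to sample \<open>s\<close>.
  Their Gram matrix with respect to \<open>cov_kernel\<close> and \<open>Gbar\<close> has the blocks \<open>a\<^sub>r\<^sub>s\<close>, \<open>B\<^sub>r\<close> and \<open>W\<close>.\<close>

definition feature_label :: "nat \<Rightarrow> (nat \<Rightarrow> nat) \<Rightarrow> nat \<Rightarrow> nat" where
  "feature_label K rr p = (if p < K then rr p else (p - K) div d + 1)"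

definition feature :: "nat \<Rightarrow> (nat \<Rightarrow> real) \<Rightarrow> nat \<Rightarrow> real \<Rightarrow> real" where
  "feature K xi p t = (if p < K then indicator {..xi p} t else q t ((p - K) mod d))"

definition gram :: "nat \<Rightarrow> (nat \<Rightarrow> nat) \<Rightarrow> (nat \<Rightarrow> real) \<Rightarrow> nat \<Rightarrow> nat \<Rightarrow> real" where
  "gram K rr xi p p' = (\<integral>t. feature K xi p t * feature K xi p' t
      * cov_kernel (feature_label K rr p) (feature_label K rr p') t \<partial>M)"

definition feature_residual ::
    "nat \<Rightarrow> (nat \<Rightarrow> nat) \<Rightarrow> (nat \<Rightarrow> real) \<Rightarrow> (nat \<Rightarrow> real) \<Rightarrow> nat \<Rightarrow> real \<Rightarrow> real" where
  "feature_residual K rr xi c k t = (\<Sum>p<K + m * d. c p * feature K xi p t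
      * (kron (feature_label K rr p) k - H (feature_label K rr p) t))"

lemma feature_measurable [measurable]: "feature K xi p \<in> borel_measurable borel"
  unfolding feature_def using d_pos by (cases "p < K") auto

lemma measurable_Gbar_iff: "f \<in> borel_measurable M \<longleftrightarrow> f \<in> borel_measurable borel"
  unfolding Gbar_def by simp

lemma feature_label_le: "\<forall>i<K. rr i \<le> m \<Longrightarrow> p < K + m * d \<Longrightarrow> feature_label K rr p \<le> m"
  unfolding feature_label_def by (auto simp: less_mult_imp_div_less Suc_le_eq)

lemma gram_commute: "gram K rr xi p p' = gram K rr xi p' p"
  unfolding gram_def by (simp add: cov_kernel_commute mult_ac)

lemma integrable_feature_sq:
  assumes rr: "\<forall>i<K. rr i \<le> m" and p: "p < K + m * d"
  shows "integrable M (\<lambda>t. (feature K xi p t)\<^sup>2 * H (feature_label K rr p) t)"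
proof (cases "p < K")
  case True
  show ?thesis
  proof (rule Bochner_Integration.integrable_bound[OF integrable_Gbar_const])
    show "(\<lambda>t. (feature K xi p t)\<^sup>2 * H (feature_label K rr p) t) \<in> borel_measurable M"
      unfolding measurable_Gbar_iff by measurable
    show "AE t in M. norm ((feature K xi p t)\<^sup>2 * H (feature_label K rr p) t) \<le> norm (1 :: real)"
      using True rr hr_nonneg hr_le_one
      by (intro AE_I2) (auto simp: feature_def feature_label_def indicator_def)
  qed
next
  case False
  have "1 \<le> (p - K) div d + 1" "(p - K) div d + 1 \<le> m" "(p - K) mod d < d"
    using False p d_pos by (auto simp: less_mult_imp_div_less Suc_le_eq)
  from integrable_q_sq_hr[OF this] show ?thesis
    using False by (simp add: feature_def feature_label_def)
qed

lemma integrable_feature_product: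
  assumes rr: "\<forall>i<K. rr i \<le> m" and p: "p < K + m * d" and p': "p' < K + m * d"
  shows "integrable M (\<lambda>t. feature K xi p t * feature K xi p' t
      * cov_kernel (feature_label K rr p) (feature_label K rr p') t)"
proof (rule Bochner_Integration.integrable_bound)
  let ?r = "feature_label K rr p" and ?r' = "feature_label K rr p'"
  show "integrable M (\<lambda>t. (feature K xi p t)\<^sup>2 * H ?r t + (feature K xi p' t)\<^sup>2 * H ?r' t)"
    using integrable_feature_sq[OF rr p] integrable_feature_sq[OF rr p'] by simp
  show "(\<lambda>t. feature K xi p t * feature K xi p' t * cov_kernel ?r ?r' t) \<in> borel_measurable M"
    unfolding measurable_Gbar_iff by measurable
  have r: "?r \<le> m" "?r' \<le> m"
    using feature_label_le[OF rr] p p' by auto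
  show "AE t in M. norm (feature K xi p t * feature K xi p' t * cov_kernel ?r ?r' t)
      \<le> norm ((feature K xi p t)\<^sup>2 * H ?r t + (feature K xi p' t)\<^sup>2 * H ?r' t)"
  proof (rule AE_I2)
    fix t
    have "\<bar>cov_kernel ?r ?r' t\<bar> \<le> H ?r t" "\<bar>cov_kernel ?r ?r' t\<bar> \<le> H ?r' t"
      using cov_kernel_abs_le[OF r(2) r(1)] cov_kernel_abs_le[OF r]
      by (simp_all add: cov_kernel_commute)
    then show "norm (feature K xi p t * feature K xi p' t * cov_kernel ?r ?r' t)
        \<le> norm ((feature K xi p t)\<^sup>2 * H ?r t + (feature K xi p' t)\<^sup>2 * H ?r' t)"
      using abs_mult_mult_le r hr_nonneg by (simp add: add_nonneg_nonneg)
  qed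
qed

lemma quadratic_form_feature_products:
  assumes rr: "\<forall>i<K. rr i \<le> m"
  shows "(\<Sum>p<K + m * d. \<Sum>p'<K + m * d. c p * c p' * (feature K xi p t * feature K xi p' t
           * cov_kernel (feature_label K rr p) (feature_label K rr p') t))
       = (\<Sum>k\<le>m. H k t * (feature_residual K rr xi c k t)\<^sup>2)"
proof -
  have "\<forall>p\<in>{..<K + m * d}. feature_label K rr p \<le> m"
    using feature_label_le[OF rr] by auto
  from multinomial_covariance_quadratic_form[OF this sum_hr, of "\<lambda>p. c p * feature K xi p t"]
  show ?thesis
    unfolding feature_residual_def cov_kernel_def by (simp add: mult_ac)
qed

lemma gram_quadratic_form:
  assumes rr: "\<forall>i<K. rr i \<le> m"
  shows "(\<Sum>p<K + m * d. \<Sum>p'<K + m * d. c p * c p' * gram K rr xi p p')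
      = (\<integral>t. (\<Sum>k\<le>m. H k t * (feature_residual K rr xi c k t)\<^sup>2) \<partial>M)"
    and "integrable M (\<lambda>t. \<Sum>k\<le>m. H k t * (feature_residual K rr xi c k t)\<^sup>2)"
proof -
  let ?F = "\<lambda>p p' t. feature K xi p t * feature K xi p' t
      * cov_kernel (feature_label K rr p) (feature_label K rr p') t"
  have int: "p < K + m * d \<Longrightarrow> p' < K + m * d \<Longrightarrow> integrable M (?F p p')" for p p'
    by (rule integrable_feature_product[OF rr])
  have "(\<integral>t. (\<Sum>p<K + m * d. \<Sum>p'<K + m * d. c p * c p' * ?F p p' t) \<partial>M)
      = (\<Sum>p<K + m * d. (\<integral>t. (\<Sum>p'<K + m * d. c p * c p' * ?F p p' t) \<partial>M))"
    using int by (intro Bochner_Integration.integral_sum Bochner_Integration.integrable_sum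
        Bochner_Integration.integrable_mult_right) auto
  also have "\<dots> = (\<Sum>p<K + m * d. \<Sum>p'<K + m * d. (\<integral>t. c p * c p' * ?F p p' t \<partial>M))"
    using int by (intro sum.cong refl Bochner_Integration.integral_sum
        Bochner_Integration.integrable_mult_right) auto
  also have "\<dots> = (\<Sum>p<K + m * d. \<Sum>p'<K + m * d. c p * c p' * gram K rr xi p p')"
    unfolding gram_def by simp
  finally show "(\<Sum>p<K + m * d. \<Sum>p'<K + m * d. c p * c p' * gram K rr xi p p')
      = (\<integral>t. (\<Sum>k\<le>m. H k t * (feature_residual K rr xi c k t)\<^sup>2) \<partial>M)"
    by (simp add: quadratic_form_feature_products[OF rr])
  have "integrable M (\<lambda>t. \<Sum>p<K + m * d. \<Sum>p'<K + m * d. c p * c p' * ?F p p' t)"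
    using int by (intro Bochner_Integration.integrable_sum Bochner_Integration.integrable_mult_right)
      auto
  then show "integrable M (\<lambda>t. \<Sum>k\<le>m. H k t * (feature_residual K rr xi c k t)\<^sup>2)"
    by (simp add: quadratic_form_feature_products[OF rr])
qed

lemma gram_quadratic_form_nonneg:
  assumes "\<forall>i<K. rr i \<le> m"
  shows "0 \<le> (\<Sum>p<K + m * d. \<Sum>p'<K + m * d. c p * c p' * gram K rr xi p p')"
  unfolding gram_quadratic_form(1)[OF assms]
  using hr_nonneg by (intro integral_nonneg_AE AE_I2 sum_nonneg mult_nonneg_nonneg) auto

lemma gram_quadratic_form_eq_0D:
  assumes rr: "\<forall>i<K. rr i \<le> m"
    and "(\<Sum>p<K + m * d. \<Sum>p'<K + m * d. c p * c p' * gram K rr xi p p') = 0"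
  shows "AE t in M. \<forall>k\<le>m. feature_residual K rr xi c k t = 0"
proof -
  have nonneg: "0 \<le> (\<Sum>k\<le>m. H k t * (feature_residual K rr xi c k t)\<^sup>2)" for t
    using hr_nonneg by (intro sum_nonneg mult_nonneg_nonneg) auto
  have "AE t in M. (\<Sum>k\<le>m. H k t * (feature_residual K rr xi c k t)\<^sup>2) = 0"
    using assms(2) nonneg
    by (simp add: gram_quadratic_form[OF rr] integral_nonneg_eq_0_iff_AE[OF gram_quadratic_form(2)[OF rr]])
  then show ?thesis
  proof (rule eventually_mono, intro allI impI)
    fix t k
    assume "(\<Sum>k\<le>m. H k t * (feature_residual K rr xi c k t)\<^sup>2) = 0" and k: "k \<le> m"
    then have "\<forall>k'\<in>{..m}. H k' t * (feature_residual K rr xi c k' t)\<^sup>2 = 0"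
      using hr_nonneg by (subst (asm) sum_nonneg_eq_0_iff) auto
    then show "feature_residual K rr xi c k t = 0"
      using k hr_pos[OF k, of t] by force
  qed
qed

lemma gram_indicators:
  "i < K \<Longrightarrow> l < K \<Longrightarrow> gram K rr xi i l = a_rs d m rho theta q g0 (rr i) (rr l) (min (xi i) (xi l))"
  unfolding a_rs_def set_lebesgue_integral_def gram_def
  by (intro Bochner_Integration.integral_cong refl)
    (auto simp: feature_def feature_label_def cov_kernel_def indicator_def)

lemma gram_indicator_q: "i < K \<Longrightarrow> j < m * d \<Longrightarrow> gram K rr xi i (K + j) = B (rr i) (xi i) $ j"
  unfolding B_r_def set_lebesgue_integral_def gram_def
  by (simp add: Let_def, intro Bochner_Integration.integral_cong refl)
    (auto simp: feature_def feature_label_def cov_kernel_def indicator_def)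

lemma gram_q_q: "j < m * d \<Longrightarrow> j' < m * d \<Longrightarrow> gram K rr xi (K + j) (K + j') = W $$ (j, j')"
  unfolding Wmat_def gram_def
  by (simp add: Let_def, intro Bochner_Integration.integral_cong refl)
    (auto simp: feature_def feature_label_def cov_kernel_def mult_ac)

lemma feature_residual_diff:
  assumes "1 \<le> k" "k \<le> m"
  shows "feature_residual 0 rr xi c k t - feature_residual 0 rr xi c 0 t
      = (\<Sum>a<d. c ((k - 1) * d + a) * q t a)"
proof -
  have "feature_residual 0 rr xi c k t - feature_residual 0 rr xi c 0 t
      = (\<Sum>j<m * d. c j * q t (j mod d) * kron (j div d + 1) k)"
    unfolding feature_residual_def
    by (simp add: feature_def feature_label_def kron_def algebra_simps flip: sum_subtractf)
  also have "\<dots> = (\<Sum>s<m. kron (s + 1) k * (\<Sum>a<d. c (s * d + a) * q t a))"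
    unfolding sum_lessThan_mult using d_pos
    by (intro sum.cong refl) (simp add: sum_distrib_left mult_ac)
  also have "\<dots> = (\<Sum>a<d. c ((k - 1) * d + a) * q t a)"
    by (rule sum_kron_Suc[OF assms])
  finally show ?thesis .
qed

lemma Wmat_carrier: "W \<in> carrier_mat (m * d) (m * d)"
  unfolding Wmat_def by simp

text \<open>\<open>W\<close> is the Gram matrix of the \<open>q\<close>-features alone, so \<open>W v = 0\<close> makes all residuals vanish
  almost everywhere; differences of residuals are the blocks of \<open>v\<close> applied to \<open>q\<close>.\<close>

lemma Wmat_kernel_block_AE_zero:
  assumes v: "v \<in> carrier_vec (m * d)" and Wv: "W *\<^sub>v v = 0\<^sub>v (m * d)" and k: "1 \<le> k" "k \<le> m"
  shows "AE t in M. (\<Sum>a<d. v $ ((k - 1) * d + a) * q t a) = 0"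
proof -
  let ?rr = "\<lambda>_. 0 :: nat" and ?xi = "\<lambda>_. 0 :: real" and ?c = "\<lambda>j. v $ j"
  have rr: "\<forall>i<0. ?rr i \<le> m"
    by simp
  have "(\<Sum>j<0 + m * d. \<Sum>j'<0 + m * d. ?c j * ?c j' * gram 0 ?rr ?xi j j') = v \<bullet> (W *\<^sub>v v)"
    using gram_q_q[of _ _ 0] by (simp add: scalar_prod_mult_mat_vec_sum[OF Wmat_carrier v v]
        sum_distrib_left mult_ac)
  also have "\<dots> = 0"
    using Wv v by simp
  finally have "AE t in M. \<forall>k\<le>m. feature_residual 0 ?rr ?xi ?c k t = 0"
    by (rule gram_quadratic_form_eq_0D[OF rr])
  then show ?thesis
  proof (rule eventually_mono)
    fix t
    assume "\<forall>k\<le>m. feature_residual 0 ?rr ?xi ?c k t = 0"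
    then show "(\<Sum>a<d. v $ ((k - 1) * d + a) * q t a) = 0"
      using feature_residual_diff[OF k, of ?rr ?xi ?c t] k by simp
  qed
qed

lemma Wmat_kernel_trivial:
  assumes v: "v \<in> carrier_vec (m * d)" and Wv: "W *\<^sub>v v = 0\<^sub>v (m * d)"
  shows "v = 0\<^sub>v (m * d)"
proof (rule eq_vecI)
  fix j
  assume "j < dim_vec (0\<^sub>v (m * d))"
  then have j: "j < m * d"
    by simp
  define k where "k = j div d + 1"
  have k: "1 \<le> k" "k \<le> m" and j_eq: "j = (k - 1) * d + j mod d"
    using j d_pos by (auto simp: k_def less_mult_imp_div_less Suc_le_eq)
  have "AE t in density lborel (\<lambda>x. ennreal (g0 x)). (\<Sum>a<d. v $ ((k - 1) * d + a) * q t a) = 0"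
    using Wmat_kernel_block_AE_zero[OF v Wv k] by (rule AE_Gbar_imp_AE_g0)
  then have "v $ ((k - 1) * d + j mod d) = 0"
    using q_indep[rule_format, of "\<lambda>a. v $ ((k - 1) * d + a)"] d_pos by simp
  then show "v $ j = 0\<^sub>v (m * d) $ j"
    using j j_eq by simp
qed (use v in simp)

lemma Wmat_invertible: obtains Wi where "mat_inverse W = Some Wi"
  using mat_inverse_if_trivial_kernel[OF Wmat_carrier Wmat_kernel_trivial] by blast

lemma schur_complement_a_rs_nonneg:
  fixes K :: nat and rr :: "nat \<Rightarrow> nat" and xi c :: "nat \<Rightarrow> real"
  assumes rr: "\<forall>i<K. rr i \<le> m" and Wi: "mat_inverse W = Some Wi"
  shows "0 \<le> (\<Sum>i<K. \<Sum>l<K. c i * c l * (a_rs d m rho theta q g0 (rr i) (rr l) (min (xi i) (xi l))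
      - B (rr i) (xi i) \<bullet> (Wi *\<^sub>v B (rr l) (xi l))))"
proof -
  let ?N = "m * d"
  have Wi_carrier: "Wi \<in> carrier_mat ?N ?N" and W_Wi: "W * Wi = 1\<^sub>m ?N"
    using mat_inverse(2)[OF Wmat_carrier Wi] by auto
  have B_carrier: "B r x \<in> carrier_vec ?N" for r x
    unfolding B_r_def by simp
  define beta :: "real vec" where "beta = vec ?N (\<lambda>j. \<Sum>i<K. c i * B (rr i) (xi i) $ j)"
  define w :: "real vec" where "w = Wi *\<^sub>v beta"
  have beta_carrier: "beta \<in> carrier_vec ?N" and w_carrier: "w \<in> carrier_vec ?N"
    unfolding w_def beta_def using Wi_carrier by auto
  have beta_gram: "beta $ j = (\<Sum>i<K. c i * gram K rr xi i (K + j))" if "j < ?N" for j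
    using that by (simp add: beta_def gram_indicator_q)
  have "(\<Sum>i<K. \<Sum>l<K. c i * c l * (B (rr i) (xi i) \<bullet> (Wi *\<^sub>v B (rr l) (xi l)))) = beta \<bullet> w"
    unfolding w_def scalar_prod_mult_mat_vec_sum[OF Wi_carrier beta_carrier beta_carrier]
    by (simp add: scalar_prod_mult_mat_vec_sum[OF Wi_carrier B_carrier B_carrier]
        bilinear_form_of_combinations beta_def)
  also have "\<dots> = (\<Sum>j<?N. w $ j * (\<Sum>i<K. c i * gram K rr xi i (K + j)))"
    using w_carrier by (simp add: scalar_prod_def atLeast0LessThan beta_gram mult.commute)
  also have "\<dots> \<le> (\<Sum>i<K. \<Sum>l<K. c i * c l * gram K rr xi i l)"
  proof (rule schur_complement_nonneg)
    show "0 \<le> (\<Sum>p<K + ?N. \<Sum>p'<K + ?N. x p * x p' * gram K rr xi p p')" for x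
      by (rule gram_quadratic_form_nonneg[OF rr])
    show "gram K rr xi (K + j) i = gram K rr xi i (K + j)" for i j
      by (rule gram_commute)
    show "(\<Sum>j'<?N. gram K rr xi (K + j) (K + j') * w $ j') = (\<Sum>i<K. c i * gram K rr xi i (K + j))"
      if j: "j < ?N" for j
    proof -
      have "(\<Sum>j'<?N. gram K rr xi (K + j) (K + j') * w $ j') = (W *\<^sub>v w) $ j"
        using j by (simp add: mult_mat_vec_index_sum[OF Wmat_carrier w_carrier] gram_q_q)
      also have "W *\<^sub>v w = beta"
        unfolding w_def by (rule mult_mat_vec_right_inverse[OF Wmat_carrier Wi_carrier W_Wi beta_carrier])
      finally show ?thesis
        using beta_gram[OF j] by simp
    qed
  qed
  also have "\<dots> = (\<Sum>i<K. \<Sum>l<K. c i * c l * a_rs d m rho theta q g0 (rr i) (rr l) (min (xi i) (xi l)))"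
    by (simp add: gram_indicators)
  finally show ?thesis
    by (simp add: right_diff_distrib sum_subtractf)
qed

lemma quadratic_form_Sigma_diff:
  fixes v :: "real vec" and rr :: "nat \<Rightarrow> nat" and al :: "nat \<Rightarrow> real"
  defines "xi \<equiv> \<lambda>i. quantile d theta q g0 (rr i) (al i)"
  defines "c \<equiv> \<lambda>i. v $ i / (rho (rr i) * gk d theta q g0 (rr i) (xi i))"
  assumes g_nz: "\<forall>i<K. gk d theta q g0 (rr i) (xi i) \<noteq> 0" and rr: "\<forall>i<K. rr i \<le> m"
    and Wi: "mat_inverse W = Some Wi" and v: "v \<in> carrier_vec K"
  shows "v \<bullet> ((Sigma_EM d rho theta q g0 K rr al - Sigma_EL d m rho theta q g0 K rr al) *\<^sub>v v)
    = (\<Sum>i<K. \<Sum>l<K. c i * c l * (a_rs d m rho theta q g0 (rr i) (rr l) (min (xi i) (xi l))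
        - B (rr i) (xi i) \<bullet> (Wi *\<^sub>v B (rr l) (xi l))))"
proof -
  let ?D = "Sigma_EM d rho theta q g0 K rr al - Sigma_EL d m rho theta q g0 K rr al"
  have D_carrier: "?D \<in> carrier_mat K K"
    unfolding Sigma_EL_def by (rule minus_carrier_mat) simp
  have "v $ i * (?D $$ (i, l) * v $ l) = c i * c l * (a_rs d m rho theta q g0 (rr i) (rr l) (min (xi i) (xi l))
      - B (rr i) (xi i) \<bullet> (Wi *\<^sub>v B (rr l) (xi l)))" if "i < K" "l < K" for i l
  proof -
    have "rho (rr i) \<noteq> 0" "rho (rr l) \<noteq> 0"
      using rho_pos rr that by (metis less_irrefl)+
    then show ?thesis
      using that g_nz
      by (simp add: Sigma_EM_def Sigma_EL_def omega_rs_def Let_def Wi xi_def c_def field_simps)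
  qed
  then show ?thesis
    by (simp add: scalar_prod_mult_mat_vec_sum[OF D_carrier v v] sum_distrib_left)
qed

end

theorem theorem4p1:
  fixes d m K :: nat and rho :: "nat \<Rightarrow> real" and theta :: "nat \<Rightarrow> nat \<Rightarrow> real"
    and q :: "real \<Rightarrow> nat \<Rightarrow> real" and g0 :: "real \<Rightarrow> real"
    and rr :: "nat \<Rightarrow> nat" and al :: "nat \<Rightarrow> real"
  assumes d_pos: "0 < d"
    and q_meas: "\<forall>a<d. (\<lambda>x. q x a) \<in> borel_measurable borel"
    and q_first: "\<forall>x. q x 0 = 1"
    and q_indep: "\<forall>c :: nat \<Rightarrow> real.
        (AE x in density lborel (\<lambda>x. ennreal (g0 x)). (\<Sum>a<d. c a * q x a) = 0)
        \<longrightarrow> (\<forall>a<d. c a = 0)"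
    and g0_meas: "g0 \<in> borel_measurable borel"
    and g0_nonneg: "\<forall>x. 0 \<le> g0 x"
    and Gk_prob: "\<forall>k\<le>m. prob_space (density lborel (\<lambda>x. ennreal (gk d theta q g0 k x)))"
    and theta0: "\<forall>a<d. theta 0 a = 0"
    and rho_pos: "\<forall>k\<le>m. 0 < rho k"
    and rho_sum: "(\<Sum>k\<le>m. rho k) = 1"
    and h_integrable: "\<exists>\<epsilon>>0. \<forall>theta' :: nat \<Rightarrow> nat \<Rightarrow> real.
        (\<forall>a<d. theta' 0 a = 0) \<and> (\<forall>k\<le>m. \<forall>a<d. \<bar>theta' k a - theta k a\<bar> < \<epsilon>)
        \<longrightarrow> integrable (density lborel (\<lambda>x. ennreal (g0 x))) (hfun d m rho theta' q)"
    and rr_range: "\<forall>i<K. rr i \<le> m"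
    and al_range: "\<forall>i<K. 0 < al i \<and> al i < 1"
    and g_cont: "\<forall>i<K. isCont (gk d theta q g0 (rr i)) (quantile d theta q g0 (rr i) (al i))"
    and g_pos: "\<forall>i<K. 0 < gk d theta q g0 (rr i) (quantile d theta q g0 (rr i) (al i))"
  shows "nonneg_definite K (Sigma_EM d rho theta q g0 K rr al - Sigma_EL d m rho theta q g0 K rr al)"
proof -
  interpret density_ratio_model d m rho theta q g0
    using d_pos q_meas q_indep g0_meas g0_nonneg theta0 rho_pos h_integrable by unfold_locales
  obtain Wi where Wi: "mat_inverse (Wmat d m rho theta q g0) = Some Wi"
    by (rule Wmat_invertible)
  have g_nz: "\<forall>i<K. gk d theta q g0 (rr i) (quantile d theta q g0 (rr i) (al i)) \<noteq> 0"
    using g_pos by force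
  show ?thesis
    unfolding nonneg_definite_def
  proof (intro conjI ballI)
    show "Sigma_EM d rho theta q g0 K rr al - Sigma_EL d m rho theta q g0 K rr al \<in> carrier_mat K K"
      unfolding Sigma_EL_def by (rule minus_carrier_mat) simp
    fix v :: "real vec"
    assume v: "v \<in> carrier_vec K"
    show "0 \<le> v \<bullet> ((Sigma_EM d rho theta q g0 K rr al - Sigma_EL d m rho theta q g0 K rr al) *\<^sub>v v)"
      unfolding quadratic_form_Sigma_diff[OF g_nz rr_range Wi v]
      by (rule schur_complement_a_rs_nonneg[OF rr_range Wi])
  qed
qed

end
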